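(* Let $K$ be a field of characteristic zero and $W_n=\mathrm{Der}_K(K[x_1^{\pm1},\ldots,x_n^{\pm1}])$. If $\sigma$ is a Lie algebra automorphism of $W_n$ with $\sigma(\partial_i)=\partial_i$ for all $i=1,\ldots,n$, then $\sigma$ is the identity.
   Context: $\partial_i=\partial/\partial x_i$. *)

theory Defs
  imports Main "HOL-Library.Poly_Mapping"
begin

text \<open>Laurent polynomial ring K[x_i^{+-1} : i in 'n] in the variables indexed by the
finite type 'n: finitely supported maps from integer exponent vectors to K,
with convolution product.\<close>
type_synonym ('n, 'a) laurent = "('n \<Rightarrow>\<^sub>0 int) \<Rightarrow>\<^sub>0 'a"

definition lconst :: "'a::comm_ring_1 \<Rightarrow> ('n, 'a) laurent" where
  "lconst c = Poly_Mapping.single 0 c"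

definition Der :: "(('n, 'a::comm_ring_1) laurent \<Rightarrow> ('n, 'a) laurent) set" where
  "Der = {D. (\<forall>p q. D (p + q) = D p + D q)
            \<and> (\<forall>c p. D (lconst c * p) = lconst c * D p)
            \<and> (\<forall>p q. D (p * q) = p * D q + q * D p)}"

definition lie_bracket ::
  "(('n, 'a::comm_ring_1) laurent \<Rightarrow> ('n, 'a) laurent) \<Rightarrow> (('n, 'a) laurent \<Rightarrow> ('n, 'a) laurent)
   \<Rightarrow> ('n, 'a) laurent \<Rightarrow> ('n, 'a) laurent" where
  "lie_bracket D E = (\<lambda>p. D (E p) - E (D p))"

definition partial :: "'n \<Rightarrow> ('n, 'a::comm_ring_1) laurent \<Rightarrow> ('n, 'a) laurent" where
  "partial i p = (\<Sum>a\<in>Poly_Mapping.keys p. Poly_Mapping.single (a - Poly_Mapping.single i 1)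
                                   (of_int (Poly_Mapping.lookup a i) * Poly_Mapping.lookup p a))"

definition lie_aut :: "((('n, 'a::comm_ring_1) laurent \<Rightarrow> ('n, 'a) laurent)
                        \<Rightarrow> (('n, 'a) laurent \<Rightarrow> ('n, 'a) laurent)) \<Rightarrow> bool" where
  "lie_aut \<sigma> \<longleftrightarrow> bij_betw \<sigma> Der Der
     \<and> (\<forall>D\<in>Der. \<forall>E\<in>Der. \<sigma> (\<lambda>p. D p + E p) = (\<lambda>p. \<sigma> D p + \<sigma> E p))
     \<and> (\<forall>c. \<forall>D\<in>Der. \<sigma> (\<lambda>p. lconst c * D p) = (\<lambda>p. lconst c * \<sigma> D p))
     \<and> (\<forall>D\<in>Der. \<forall>E\<in>Der. \<sigma> (lie_bracket D E) = lie_bracket (\<sigma> D) (\<sigma> E))"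

end

theory Submission
  imports Defs
begin

text \<open>If \<open>\<sigma>\<close> fixes every \<open>\<partial>\<^sub>i\<close> and \<open>[\<partial>\<^sub>i, D]\<close> is fixed for all \<open>i\<close>, then
  \<open>\<sigma> D - D\<close> commutes with all \<open>\<partial>\<^sub>i\<close> and hence maps every variable to a constant.
  For the Euler operators this gives \<open>\<sigma> (x\<^sub>j \<partial>\<^sub>j) = (x\<^sub>j + \<gamma>) \<partial>\<^sub>j\<close>, and \<open>\<gamma> = 0\<close>
  because for \<open>\<gamma> \<noteq> 0\<close> the operator \<open>ad ((x\<^sub>j + \<gamma>) \<partial>\<^sub>j)\<close> has no eigenvector with
  eigenvalue \<open>-2\<close>, whereas \<open>x\<^sub>j\<^sup>-\<^sup>1 \<partial>\<^sub>j\<close> is one for \<open>ad (x\<^sub>j \<partial>\<^sub>j)\<close>.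
  Induction on the degree then shows that \<open>\<sigma>\<close> fixes \<open>x\<^sup>a \<partial>\<^sub>k\<close> for \<open>a \<ge> 0\<close>: since
  \<open>x\<^sup>a \<partial>\<^sub>k\<close> is an eigenvector of each fixed \<open>ad (x\<^sub>i \<partial>\<^sub>i)\<close>, the constant
  \<open>c = (\<sigma> (x\<^sup>a \<partial>\<^sub>k) - x\<^sup>a \<partial>\<^sub>k) x\<^sub>m\<close> satisfies \<open>(a\<^sub>i - \<delta>\<^sub>i\<^sub>k + \<delta>\<^sub>i\<^sub>m) c = 0\<close> for all
  \<open>i\<close>, which forces \<open>c = 0\<close> unless \<open>a = 0\<close>.
  For arbitrary \<open>a \<in> \<int>\<^sup>n\<close> the difference \<open>\<sigma> (x\<^sup>a \<partial>\<^sub>k) - x\<^sup>a \<partial>\<^sub>k\<close> commutes with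
  all \<open>x\<^sup>b \<partial>\<^sub>j\<close> for large \<open>b\<close>, whose brackets with \<open>x\<^sup>a \<partial>\<^sub>k\<close> are polynomial, and
  such a derivation is zero. Every derivation is a finite sum of fields \<open>c x\<^sup>a \<partial>\<^sub>k\<close>.\<close>

abbreviation lookup where "lookup \<equiv> Poly_Mapping.lookup"
abbreviation keys where "keys \<equiv> Poly_Mapping.keys"
abbreviation single where "single \<equiv> Poly_Mapping.single"

definition unit_exp :: "'n \<Rightarrow> 'n \<Rightarrow>\<^sub>0 int" where
  "unit_exp i = single i 1"

definition lmonom :: "('n \<Rightarrow>\<^sub>0 int) \<Rightarrow> ('n, 'a::comm_ring_1) laurent" where
  "lmonom a = single a 1"

definition lvar :: "'n \<Rightarrow> ('n, 'a::comm_ring_1) laurent" where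
  "lvar i = lmonom (unit_exp i)"

lemma lookup_unit_exp: "lookup (unit_exp i) j = (if i = j then 1 else 0)"
  by (simp add: unit_exp_def lookup_single)

lemma lookup_lconst: "lookup (lconst c) a = (if a = 0 then c else 0)"
  by (simp add: lconst_def lookup_single)

lemma lookup_lconst_mult: "lookup (lconst c * p) a = c * lookup p a"
  unfolding lconst_def mult_map_scale_conv_mult[symmetric]
  by (simp add: map.rep_eq when_def)

lemma lconst_zero [simp]: "lconst 0 = 0"
  by (simp add: lconst_def)

lemma lconst_one [simp]: "lconst 1 = 1"
  by (simp add: lconst_def)

lemma lconst_mult_lconst: "lconst a * lconst b = lconst (a * b)"
  by (simp add: lconst_def mult_single)

lemma lconst_diff: "lconst (a - b) = lconst a - lconst b"
  by (simp add: lconst_def single_diff)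

lemma lconst_uminus: "lconst (- c) = - lconst c"
  by (simp add: lconst_def single_uminus)

lemma lconst_numeral [simp]: "lconst (numeral n) = numeral n"
  by (simp add: lconst_def)

lemma lconst_of_nat [simp]: "lconst (of_nat n) = of_nat n"
  by (simp add: lconst_def)

lemma lconst_eq_iff [simp]: "lconst a = lconst b \<longleftrightarrow> a = b"
  by (metis lconst_def lookup_single_eq)

lemma lconst_eq_0_iff [simp]: "lconst a = 0 \<longleftrightarrow> a = 0"
  using lconst_eq_iff[of a 0] by simp

lemma lmonom_zero [simp]: "lmonom 0 = 1"
  by (simp add: lmonom_def)

lemma lmonom_add: "lmonom (a + b) = lmonom a * lmonom b"
  by (simp add: lmonom_def mult_single)

lemma lmonom_neq_zero: "lmonom a \<noteq> 0"
  by (metis lmonom_def lookup_single_eq lookup_zero zero_neq_one)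

lemma lmonom_mult_lmonom_uminus: "lmonom a * lmonom (- a) = 1"
  by (simp flip: lmonom_add)

lemma lmonom_mult_eq_0_iff [simp]: "lmonom a * p = 0 \<longleftrightarrow> p = 0"
proof
  assume "lmonom a * p = 0"
  then have "lmonom (- a) * lmonom a * p = 0"
    by (simp add: mult.assoc)
  then show "p = 0"
    by (simp add: mult.commute[of "lmonom (- a)"] lmonom_mult_lmonom_uminus)
qed simp

lemma lvar_mult_lmonom: "lvar i * lmonom a = lmonom (a + unit_exp i)"
  by (simp add: lvar_def lmonom_add algebra_simps)

lemma single_eq_lconst_mult_lmonom: "single a c = lconst c * lmonom a"
  by (simp add: lmonom_def lconst_def mult_single)

lemma poly_mapping_eq_sum_single: "p = (\<Sum>a\<in>keys p. single a (lookup p a))"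
  by (rule poly_mapping_eqI) (auto simp: lookup_sum lookup_single when_def in_keys_iff)

lemma lookup_lmonom_mult: "lookup (lmonom a * p) b = lookup p (b - a)"
proof -
  have "lmonom a * p = (\<Sum>c\<in>keys p. single (a + c) (lookup p c))"
    by (subst poly_mapping_eq_sum_single[of p])
       (simp add: sum_distrib_left lmonom_def mult_single)
  also have "lookup \<dots> b = (\<Sum>c\<in>keys p. if c = b - a then lookup p c else 0)"
    by (auto simp: lookup_sum lookup_single when_def algebra_simps intro!: sum.cong)
  finally show ?thesis
    by (simp add: in_keys_iff)
qed

lemma laurent_eq_sum_monoms:
  "p = (\<Sum>a\<in>keys p. lconst (lookup p a) * lmonom a)"
  by (subst poly_mapping_eq_sum_single) (simp add: single_eq_lconst_mult_lmonom)

lemma exp_eq_sum_unit_exp: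
  "(a :: 'n::finite \<Rightarrow>\<^sub>0 int) = (\<Sum>i\<in>UNIV. single i (lookup a i))"
  by (rule poly_mapping_eqI) (simp add: lookup_sum lookup_single when_def)

lemma lookup_partial: "lookup (partial i p) a = of_int (lookup a i + 1) * lookup p (a + unit_exp i)"
proof -
  have "lookup (partial i p) a =
      (\<Sum>b\<in>keys p. if b = a + unit_exp i then of_int (lookup b i) * lookup p b else 0)"
    unfolding partial_def lookup_sum
    by (intro sum.cong refl) (auto simp: lookup_single when_def unit_exp_def algebra_simps)
  then show ?thesis
    by (auto simp: in_keys_iff lookup_add lookup_unit_exp)
qed

lemma partial_single: "partial i (single a c) = single (a - unit_exp i) (of_int (lookup a i) * c)"
  by (rule poly_mapping_eqI)
     (auto simp: lookup_partial lookup_single when_def lookup_add lookup_unit_exp algebra_simps)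

lemma partial_lmonom: "partial i (lmonom a) = lconst (of_int (lookup a i)) * lmonom (a - unit_exp i)"
  by (simp add: lmonom_def partial_single lconst_def mult_single del: single_of_int)

lemma partial_lvar: "partial i (lvar j) = (if i = j then 1 else 0)"
  by (auto simp: lvar_def lmonom_def partial_single lookup_unit_exp)

lemma partial_add: "partial i (p + q) = partial i p + partial i q"
  by (rule poly_mapping_eqI) (simp add: lookup_partial lookup_add algebra_simps)

lemma partial_lconst_mult: "partial i (lconst c * p) = lconst c * partial i p"
  by (rule poly_mapping_eqI) (simp only: lookup_partial lookup_lconst_mult, simp add: algebra_simps)

lemma partial_zero [simp]: "partial i 0 = 0"
  by (rule poly_mapping_eqI) (simp add: lookup_partial)

lemma partial_sum: "partial i (sum f S) = (\<Sum>s\<in>S. partial i (f s))"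
  by (induction S rule: infinite_finite_induct) (simp_all add: partial_add)

lemma partial_mult:
  fixes p q :: "('n, 'a::comm_ring_1) laurent"
  shows "partial i (p * q) = p * partial i q + q * partial i p"
proof -
  have monomial_case: "partial i (single a u * single b v) =
      single a u * partial i (single b v) + single b v * partial i (single a u)" for a b and u v :: 'a
    by (simp add: mult_single partial_single lookup_add algebra_simps flip: single_add)
  have "partial i (p * q) = partial i ((\<Sum>a\<in>keys p. single a (lookup p a)) *
                                       (\<Sum>b\<in>keys q. single b (lookup q b)))"
    by (simp flip: poly_mapping_eq_sum_single)
  also have "\<dots> = (\<Sum>a\<in>keys p. single a (lookup p a)) * partial i (\<Sum>b\<in>keys q. single b (lookup q b))
      + (\<Sum>b\<in>keys q. single b (lookup q b)) * partial i (\<Sum>a\<in>keys p. single a (lookup p a))"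
    by (simp only: sum_product partial_sum monomial_case sum.distrib)
       (simp add: sum.swap[of _ "keys q"])
  finally show ?thesis
    by (simp flip: poly_mapping_eq_sum_single)
qed

lemma partials_eq_zero_imp_const:
  fixes p :: "('n, 'a::{idom, ring_char_0}) laurent"
  assumes "\<And>i. partial i p = 0"
  shows "p = lconst (lookup p 0)"
proof (rule poly_mapping_eqI)
  fix a
  show "lookup p a = lookup (lconst (lookup p 0)) a"
  proof (cases "a = 0")
    case False
    then obtain i where i: "lookup a i \<noteq> 0"
      by (metis lookup_zero poly_mapping_eqI)
    have "lookup (partial i p) (a - unit_exp i) = 0"
      by (simp add: assms)
    then have "of_int (lookup a i) * lookup p a = 0"
      by (simp add: lookup_partial lookup_minus lookup_unit_exp)
    with i False show ?thesis
      by (simp add: lookup_lconst)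
  qed (simp add: lookup_lconst)
qed

lemma DerI:
  assumes "\<And>p q. D (p + q) = D p + D q" and "\<And>c p. D (lconst c * p) = lconst c * D p"
    and "\<And>p q. D (p * q) = p * D q + q * D p"
  shows "D \<in> Der"
  using assms unfolding Der_def by blast

lemma
  assumes "D \<in> Der"
  shows Der_add: "D (p + q) = D p + D q"
    and Der_lconst_mult: "D (lconst c * p) = lconst c * D p"
    and Der_mult: "D (p * q) = p * D q + q * D p"
  using assms unfolding Der_def by blast+

lemma Der_zero: "D \<in> Der \<Longrightarrow> D 0 = 0"
  using Der_add[of D 0 0] by simp

lemma Der_one: "D \<in> Der \<Longrightarrow> D 1 = 0"
  using Der_mult[of D 1 1] by simp

lemma Der_lconst: "D \<in> Der \<Longrightarrow> D (lconst c) = 0"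
  using Der_lconst_mult[of D c 1] by (simp add: Der_one)

lemma Der_diff: "D \<in> Der \<Longrightarrow> D (p - q) = D p - D q"
  using Der_add[of D "p - q" q] by (simp add: algebra_simps)

lemma Der_sum: "D \<in> Der \<Longrightarrow> D (sum f S) = (\<Sum>s\<in>S. D (f s))"
  by (induction S rule: infinite_finite_induct) (simp_all add: Der_zero Der_add)

lemma partial_Der: "partial i \<in> Der"
  by (rule DerI) (rule partial_add partial_lconst_mult partial_mult)+

lemma zero_Der: "(\<lambda>p. 0) \<in> Der"
  by (rule DerI) simp_all

lemma add_Der: "D \<in> Der \<Longrightarrow> E \<in> Der \<Longrightarrow> (\<lambda>p. D p + E p) \<in> Der"
  by (rule DerI) (simp_all add: Der_add Der_lconst Der_mult algebra_simps)

lemma diff_Der: "D \<in> Der \<Longrightarrow> E \<in> Der \<Longrightarrow> (\<lambda>p. D p - E p) \<in> Der"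
  by (rule DerI) (simp_all add: Der_add Der_lconst Der_mult algebra_simps)

lemma mult_Der: "D \<in> Der \<Longrightarrow> (\<lambda>p. f * D p) \<in> Der"
  by (rule DerI) (simp_all add: Der_add Der_lconst Der_mult algebra_simps)

lemma sum_Der: "(\<And>s. s \<in> S \<Longrightarrow> D s \<in> Der) \<Longrightarrow> (\<lambda>p. \<Sum>s\<in>S. D s p) \<in> Der"
  by (induction S rule: infinite_finite_induct) (simp_all add: zero_Der add_Der)

lemma lie_bracket_Der: "D \<in> Der \<Longrightarrow> E \<in> Der \<Longrightarrow> lie_bracket D E \<in> Der"
  unfolding lie_bracket_def
  by (rule DerI) (simp_all add: Der_add Der_lconst Der_mult algebra_simps)

lemma Der_lmonom_uminus:
  assumes "D \<in> Der" and "D (lmonom a) = 0"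
  shows "D (lmonom (- a)) = 0"
  using assms Der_mult[of D "lmonom a" "lmonom (- a)"]
  by (simp add: lmonom_mult_lmonom_uminus Der_one)

lemma Der_lmonom_eq_zero:
  fixes D :: "('n::finite, 'a::comm_ring_1) laurent \<Rightarrow> ('n, 'a) laurent"
  assumes D: "D \<in> Der" and vars: "\<And>i. D (lvar i) = 0"
  shows "D (lmonom a) = 0"
proof -
  have add: "D (lmonom (b + c)) = 0" if "D (lmonom b) = 0" "D (lmonom c) = 0" for b c
    using that by (simp add: lmonom_add Der_mult[OF D])
  have single: "D (lmonom (single i k)) = 0" for i k
  proof (induction k rule: int_induct[where k = 0])
    case base
    then show ?case by (simp add: Der_one[OF D])
  next
    case (step1 k)
    have "single i (k + 1) = single i k + unit_exp i"
      by (simp add: unit_exp_def single_add)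
    with step1 vars show ?case
      by (simp add: add lvar_def)
  next
    case (step2 k)
    have "single i (k - 1) = single i k + - unit_exp i"
      by (simp add: unit_exp_def single_diff single_uminus)
    with step2 vars show ?case
      by (metis add Der_lmonom_uminus[OF D] lvar_def)
  qed
  have "D (lmonom (\<Sum>i\<in>S. single i (lookup a i))) = 0" for S
    by (induction S rule: infinite_finite_induct) (simp_all add: Der_one[OF D] add single)
  then show ?thesis
    by (subst exp_eq_sum_unit_exp)
qed

lemma Der_eqI:
  fixes D E :: "('n::finite, 'a::comm_ring_1) laurent \<Rightarrow> ('n, 'a) laurent"
  assumes "D \<in> Der" and "E \<in> Der" and "\<And>i. D (lvar i) = E (lvar i)"
  shows "D = E"
proof
  fix p
  have diff: "(\<lambda>p. D p - E p) \<in> Der"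
    using assms(1,2) by (rule diff_Der)
  have "D (lmonom a) - E (lmonom a) = 0" for a
    using Der_lmonom_eq_zero[OF diff] assms by simp
  then have "D p - E p = 0"
    by (subst (1 2) laurent_eq_sum_monoms)
       (simp add: Der_sum Der_lconst_mult assms sum_subtractf flip: right_diff_distrib)
  then show "D p = E p"
    by simp
qed

lemma Der_eq_sum_partial:
  fixes D :: "('n::finite, 'a::comm_ring_1) laurent \<Rightarrow> ('n, 'a) laurent"
  assumes "D \<in> Der"
  shows "D = (\<lambda>p. \<Sum>i\<in>UNIV. D (lvar i) * partial i p)"
  by (rule Der_eqI[OF assms sum_Der[OF mult_Der[OF partial_Der]]])
     (simp add: partial_lvar if_distrib cong: if_cong)

section \<open>Monomial vector fields\<close>

definition monom_der :: "('n \<Rightarrow>\<^sub>0 int) \<Rightarrow> 'n \<Rightarrow> ('n, 'a::comm_ring_1) laurent \<Rightarrow> ('n, 'a) laurent" where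
  "monom_der a k = (\<lambda>p. lmonom a * partial k p)"

definition euler :: "'n \<Rightarrow> ('n, 'a::comm_ring_1) laurent \<Rightarrow> ('n, 'a) laurent" where
  "euler i = monom_der (unit_exp i) i"

lemma monom_der_Der: "monom_der a k \<in> Der"
  unfolding monom_der_def by (rule mult_Der[OF partial_Der])

lemma euler_Der: "euler i \<in> Der"
  by (simp add: euler_def monom_der_Der)

lemma monom_der_zero: "monom_der 0 k = partial k"
  by (simp add: monom_der_def)

lemma monom_der_lvar: "monom_der a k (lvar m) = (if k = m then lmonom a else 0)"
  by (simp add: monom_der_def partial_lvar)

lemma monom_der_zero_apply [simp]: "monom_der a k 0 = 0"
  by (simp add: monom_der_def)

lemma monom_der_lmonom:
  "monom_der a k (lmonom b :: ('n, 'a::comm_ring_1) laurent) =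
   lconst (of_int (lookup b k)) * lmonom (a + b - unit_exp k)"
proof -
  have "lmonom a * lmonom (b - unit_exp k) = (lmonom (a + b - unit_exp k) :: ('n, 'a) laurent)"
    by (simp add: add_diff_eq flip: lmonom_add)
  then show ?thesis
    unfolding monom_der_def partial_lmonom by (metis mult.left_commute)
qed

lemma euler_apply: "euler i p = lvar i * partial i p"
  by (simp add: euler_def monom_der_def lvar_def)

lemma euler_lvar: "euler i (lvar m) = (if i = m then lvar m else 0)"
  by (simp add: euler_apply partial_lvar)

lemma Der_partial_lvar: "D \<in> Der \<Longrightarrow> D (partial i (lvar m)) = 0"
  by (simp add: partial_lvar Der_one Der_zero)

lemma lie_bracket_monom_der:
  fixes a b :: "'n::finite \<Rightarrow>\<^sub>0 int"
  shows "lie_bracket (monom_der a j) (monom_der b k :: ('n, 'a::comm_ring_1) laurent \<Rightarrow> _) =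
    (\<lambda>p. lconst (of_int (lookup b j)) * monom_der (a + b - unit_exp j) k p
        - lconst (of_int (lookup a k)) * monom_der (a + b - unit_exp k) j p)"
proof (rule Der_eqI)
  show "lie_bracket (monom_der a j) (monom_der b k) \<in> Der"
    by (rule lie_bracket_Der[OF monom_der_Der monom_der_Der])
  show "(\<lambda>p. lconst (of_int (lookup b j)) * monom_der (a + b - unit_exp j) k p
        - lconst (of_int (lookup a k)) * monom_der (a + b - unit_exp k) j p) \<in> Der"
    by (rule diff_Der[OF mult_Der[OF monom_der_Der] mult_Der[OF monom_der_Der]])
  show "lie_bracket (monom_der a j) (monom_der b k) (lvar m) =
      lconst (of_int (lookup b j)) * monom_der (a + b - unit_exp j) k (lvar m)
      - lconst (of_int (lookup a k)) * monom_der (a + b - unit_exp k) j (lvar m)" for m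
    by (auto simp: lie_bracket_def monom_der_lvar monom_der_lmonom add.commute[of b a])
qed

lemma lie_bracket_partial_monom_der:
  "lie_bracket (partial i) (monom_der a k :: ('n::finite, 'a::comm_ring_1) laurent \<Rightarrow> _)
    = (\<lambda>p. lconst (of_int (lookup a i)) * monom_der (a - unit_exp i) k p)"
  using lie_bracket_monom_der[of 0 i a k] by (simp add: monom_der_zero)

lemma lie_bracket_euler_monom_der:
  "lie_bracket (euler j) (monom_der a k :: ('n::finite, 'a::comm_ring_1) laurent \<Rightarrow> _)
    = (\<lambda>p. lconst (of_int (lookup a j) - (if j = k then 1 else 0)) * monom_der a k p)"
  using lie_bracket_monom_der[of "unit_exp j" j a k]
  by (auto simp: euler_def lookup_unit_exp algebra_simps lconst_diff)

text \<open>Evaluated at \<open>x\<^sub>m\<close>, the commutation with \<open>x\<^sup>b \<partial>\<^sub>m\<close> says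
  \<open>x\<^sup>b \<partial>\<^sub>m (G x\<^sub>m) = G (x\<^sup>b)\<close>; for \<open>b = N\<close> and \<open>b = N + e\<^sub>m\<close> the Leibniz rule then
  leaves \<open>x\<^sup>N G x\<^sub>m = 0\<close>.\<close>

lemma Der_eq_zero_if_commutes_with_monom_ders:
  fixes G :: "('n::finite, 'a::comm_ring_1) laurent \<Rightarrow> ('n, 'a) laurent"
  assumes G: "G \<in> Der"
    and comm: "\<And>b j. (\<And>i. lookup N i \<le> lookup b i) \<Longrightarrow> lie_bracket (monom_der b j) G = (\<lambda>p. 0)"
  shows "G = (\<lambda>p. 0)"
proof (rule Der_eqI[OF G zero_Der])
  fix m
  have high: "lmonom b * partial m (G (lvar m)) = G (lmonom b)" if "\<And>i. lookup N i \<le> lookup b i" for b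
    using fun_cong[OF comm[OF that, of m], of "lvar m"]
    by (simp add: lie_bracket_def monom_der_lvar monom_der_def partial_lvar)
  have "lvar m * G (lmonom N) = lmonom (N + unit_exp m) * partial m (G (lvar m))"
    by (simp flip: high lvar_mult_lmonom add: mult.assoc)
  also have "\<dots> = G (lvar m * lmonom N)"
    by (simp add: high lookup_add lookup_unit_exp lvar_mult_lmonom)
  also have "\<dots> = lvar m * G (lmonom N) + lmonom N * G (lvar m)"
    by (simp add: Der_mult[OF G])
  finally show "G (lvar m) = 0"
    by simp
qed

section \<open>A first-order equation without Laurent solutions\<close>

lemma lookup_shifted_euler:
  "lookup ((lvar j + lconst \<gamma>) * partial j f + lconst c * f) a =
     (of_int (lookup a j) + c) * lookup f a
   + \<gamma> * (of_int (lookup a j) + 1) * lookup f (a + unit_exp j)"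
proof -
  have "lookup (lvar j * partial j f) a = of_int (lookup a j) * lookup f a"
    by (simp add: lvar_def lookup_lmonom_mult lookup_partial lookup_minus lookup_unit_exp)
  then show ?thesis
    by (simp only: distrib_right lookup_add lookup_lconst_mult lookup_partial) (simp add: algebra_simps)
qed

text \<open>Comparing coefficients, the lowest power of \<open>x\<^sub>j\<close> occurring in a solution must be
  \<open>0\<close> and the highest one \<open>-\<kappa> < 0\<close>.\<close>

lemma shifted_euler_eq_zero:
  fixes f :: "('n, 'a::field_char_0) laurent"
  assumes "\<gamma> \<noteq> 0" and "\<kappa> > 0"
    and eq: "(lvar j + lconst \<gamma>) * partial j f + of_nat \<kappa> * f = 0"
  shows "f = 0"
proof (rule ccontr)
  assume "f \<noteq> 0"
  then have fin: "finite (keys f)" and ne: "keys f \<noteq> {}"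
    by auto
  have coeff: "(of_int (lookup c j) + of_nat \<kappa>) * lookup f c
      + \<gamma> * (of_int (lookup c j) + 1) * lookup f (c + unit_exp j) = 0" for c
    using arg_cong[OF eq, of "\<lambda>p. lookup p c"] lookup_shifted_euler[of j \<gamma> f "of_nat \<kappa>" c]
    by simp
  obtain a where a: "a \<in> keys f" and a_min: "\<And>c. c \<in> keys f \<Longrightarrow> lookup a j \<le> lookup c j"
    using arg_min_if_finite[OF fin ne, of "\<lambda>c. lookup c j"] by (metis not_less)
  obtain b where b: "b \<in> keys f" and b_max: "\<And>c. c \<in> keys f \<Longrightarrow> lookup c j \<le> lookup b j"
    using arg_min_if_finite[OF fin ne, of "\<lambda>c. - lookup c j"] by (metis neg_le_iff_le not_less)
  have "a - unit_exp j \<notin> keys f"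
    using a_min[of "a - unit_exp j"] by (auto simp: lookup_minus lookup_unit_exp)
  then have "\<gamma> * of_int (lookup a j) * lookup f a = 0"
    using coeff[of "a - unit_exp j"] by (simp add: in_keys_iff lookup_minus lookup_unit_exp)
  with a \<open>\<gamma> \<noteq> 0\<close> have "lookup a j = 0"
    by (simp add: in_keys_iff)
  have "b + unit_exp j \<notin> keys f"
    using b_max[of "b + unit_exp j"] by (auto simp: lookup_add lookup_unit_exp)
  then have "(of_int (lookup b j) + of_nat \<kappa>) * lookup f b = (0 :: 'a)"
    using coeff[of b] by (simp add: in_keys_iff)
  with b have "lookup b j + int \<kappa> = 0"
    by (simp add: in_keys_iff) (metis of_int_eq_0_iff of_int_add of_int_of_nat_eq)
  with \<open>lookup a j = 0\<close> a_min[OF b] \<open>\<kappa> > 0\<close> show False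
    by simp
qed

section \<open>Automorphisms fixing the partial derivatives\<close>

definition total_degree :: "('n::finite \<Rightarrow>\<^sub>0 int) \<Rightarrow> nat" where
  "total_degree a = (\<Sum>i\<in>UNIV. nat (lookup a i))"

lemma total_degree_diff_unit_exp:
  "lookup a i \<ge> 1 \<Longrightarrow> total_degree (a - unit_exp i) < total_degree a"
  unfolding total_degree_def
  by (rule sum_strict_mono_ex1) (auto simp: lookup_minus lookup_unit_exp)

lemma nonneg_exp_eq_unit_exp_diff:
  fixes a :: "'n \<Rightarrow>\<^sub>0 int"
  assumes "\<And>i. lookup a i \<ge> 0"
    and "\<And>i. lookup a i = (if i = k then 1 else 0) - (if i = m then 1 else 0)"
  shows "a = 0"
proof -
  have "m = k"
  proof (rule ccontr)
    assume "m \<noteq> k"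
    then have "lookup a m = -1"
      using assms(2)[of m] by simp
    with assms(1)[of m] show False
      by simp
  qed
  with assms(2) show ?thesis
    by (intro poly_mapping_eqI) simp
qed

locale partial_fixing_aut =
  fixes \<sigma> :: "(('n::finite, 'a::field_char_0) laurent \<Rightarrow> ('n, 'a) laurent)
                 \<Rightarrow> (('n, 'a) laurent \<Rightarrow> ('n, 'a) laurent)"
  assumes lie_aut: "lie_aut \<sigma>"
    and fixes_partial: "\<And>i. \<sigma> (partial i) = partial i"
begin

lemma aut_Der: "D \<in> Der \<Longrightarrow> \<sigma> D \<in> Der"
  using lie_aut unfolding lie_aut_def bij_betw_def by blast

lemma aut_inj: "D \<in> Der \<Longrightarrow> E \<in> Der \<Longrightarrow> \<sigma> D = \<sigma> E \<Longrightarrow> D = E"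
  using lie_aut unfolding lie_aut_def bij_betw_def inj_on_def by blast

lemma aut_add: "D \<in> Der \<Longrightarrow> E \<in> Der \<Longrightarrow> \<sigma> (\<lambda>p. D p + E p) = (\<lambda>p. \<sigma> D p + \<sigma> E p)"
  using lie_aut unfolding lie_aut_def by blast

lemma aut_lconst_mult: "D \<in> Der \<Longrightarrow> \<sigma> (\<lambda>p. lconst c * D p) = (\<lambda>p. lconst c * \<sigma> D p)"
  using lie_aut unfolding lie_aut_def by blast

lemma aut_lie_bracket:
  "D \<in> Der \<Longrightarrow> E \<in> Der \<Longrightarrow> \<sigma> (lie_bracket D E) = lie_bracket (\<sigma> D) (\<sigma> E)"
  using lie_aut unfolding lie_aut_def by blast

lemma aut_zero: "\<sigma> (\<lambda>p. 0) = (\<lambda>p. 0)"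
  using aut_lconst_mult[OF partial_Der, of 0] by simp

lemma aut_diff: "D \<in> Der \<Longrightarrow> E \<in> Der \<Longrightarrow> \<sigma> (\<lambda>p. D p - E p) = (\<lambda>p. \<sigma> D p - \<sigma> E p)"
  using aut_add[OF _ mult_Der, of D E "lconst (-1)"] aut_lconst_mult[of E "-1"]
  by (simp add: lconst_uminus)

lemma aut_sum:
  "(\<And>s. s \<in> S \<Longrightarrow> D s \<in> Der) \<Longrightarrow> \<sigma> (\<lambda>p. \<Sum>s\<in>S. D s p) = (\<lambda>p. \<Sum>s\<in>S. \<sigma> (D s) p)"
proof (induction S rule: infinite_finite_induct)
  case (insert s S)
  then show ?case
    using aut_add[of "D s" "\<lambda>p. \<Sum>s\<in>S. D s p"] sum_Der[of S D] by simp
qed (simp_all add: aut_zero)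

lemma aut_var_shift:
  assumes D: "D \<in> Der"
    and fixed: "\<And>i. \<sigma> (lie_bracket (partial i) D) = lie_bracket (partial i) D"
  shows "\<exists>c. \<sigma> D (lvar m) = D (lvar m) + lconst c"
proof -
  have "partial i (\<sigma> D (lvar m) - D (lvar m)) = 0" for i
  proof -
    have "lie_bracket (partial i) (\<sigma> D) = lie_bracket (partial i) D"
      using aut_lie_bracket[OF partial_Der D] fixed fixes_partial by simp
    then have "lie_bracket (partial i) (\<sigma> D) (lvar m) = lie_bracket (partial i) D (lvar m)"
      by simp
    then show ?thesis
      by (simp add: lie_bracket_def Der_partial_lvar D aut_Der Der_diff[OF partial_Der])
  qed
  then have "\<sigma> D (lvar m) - D (lvar m) = lconst (lookup (\<sigma> D (lvar m) - D (lvar m)) 0)"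
    by (rule partials_eq_zero_imp_const)
  then show ?thesis
    by (metis add_diff_cancel_left' add_diff_eq)
qed

lemma aut_monom_der_var_shift:
  assumes "\<And>i. lookup a i \<noteq> 0 \<Longrightarrow> \<sigma> (monom_der (a - unit_exp i) k) = monom_der (a - unit_exp i) k"
  shows "\<exists>c. \<sigma> (monom_der a k) (lvar m) = monom_der a k (lvar m) + lconst c"
proof (rule aut_var_shift[OF monom_der_Der])
  fix i
  show "\<sigma> (lie_bracket (partial i) (monom_der a k)) = lie_bracket (partial i) (monom_der a k)"
    using assms[of i]
    by (cases "lookup a i = 0") (simp_all add: lie_bracket_partial_monom_der aut_lconst_mult monom_der_Der aut_zero)
qed

lemma aut_euler_var_shift: "\<exists>c. \<sigma> (euler j) (lvar m) = euler j (lvar m) + lconst c"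
  unfolding euler_def
  by (rule aut_monom_der_var_shift) (simp add: lookup_unit_exp monom_der_zero fixes_partial split: if_splits)

lemma aut_euler_offdiag:
  assumes "j \<noteq> l"
  shows "\<sigma> (euler j) (lvar l) = 0"
proof -
  obtain c where c: "\<sigma> (euler l) (lvar l) = lvar l + lconst c"
    using aut_euler_var_shift[of l l] by (auto simp: euler_apply partial_lvar)
  obtain d where d: "\<sigma> (euler j) (lvar l) = lconst d"
    using aut_euler_var_shift[of j l] assms by (auto simp: euler_apply partial_lvar)
  have "lie_bracket (euler j) (euler l :: ('n, 'a) laurent \<Rightarrow> _) = (\<lambda>p. 0)"
    using assms by (simp add: euler_def[of l] lie_bracket_euler_monom_der lookup_unit_exp)
  then have "lie_bracket (\<sigma> (euler j)) (\<sigma> (euler l)) (lvar l) = 0"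
    using aut_lie_bracket[OF euler_Der euler_Der, of j l] aut_zero by metis
  then show ?thesis
    by (simp add: lie_bracket_def c d Der_add Der_lconst aut_Der euler_Der)
qed

lemma aut_euler_shift: obtains \<gamma> where "\<sigma> (euler j) = (\<lambda>p. (lvar j + lconst \<gamma>) * partial j p)"
proof -
  obtain \<gamma> where \<gamma>: "\<sigma> (euler j) (lvar j) = lvar j + lconst \<gamma>"
    using aut_euler_var_shift[of j j] by (auto simp: euler_apply partial_lvar)
  have "\<sigma> (euler j) = (\<lambda>p. (lvar j + lconst \<gamma>) * partial j p)"
    by (rule Der_eqI[OF aut_Der[OF euler_Der] mult_Der[OF partial_Der]])
       (auto simp: \<gamma> partial_lvar aut_euler_offdiag)
  then show ?thesis
    by (rule that)
qed

lemma aut_euler_shift_eq_zero: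
  assumes \<gamma>: "\<sigma> (euler j) = (\<lambda>p. (lvar j + lconst \<gamma>) * partial j p)"
  shows "\<gamma> = 0"
proof (rule ccontr)
  assume "\<gamma> \<noteq> 0"
  define D :: "('n, 'a) laurent \<Rightarrow> ('n, 'a) laurent" where "D = monom_der (- unit_exp j) j"
  have DD: "D \<in> Der"
    by (simp add: D_def monom_der_Der)
  have "lie_bracket (\<sigma> (euler j)) (\<sigma> D) = \<sigma> (lie_bracket (euler j) D)"
    using aut_lie_bracket[OF euler_Der DD] by simp
  also have "lie_bracket (euler j) D = (\<lambda>p. lconst (- 2) * D p)"
    by (simp add: D_def lie_bracket_euler_monom_der lookup_unit_exp)
  finally have eigen: "lie_bracket (\<sigma> (euler j)) (\<sigma> D) = (\<lambda>p. lconst (- 2) * \<sigma> D p)"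
    by (simp add: aut_lconst_mult[OF DD])
  have "\<sigma> D (lvar m) = 0" for m
  proof (rule shifted_euler_eq_zero[OF \<open>\<gamma> \<noteq> 0\<close>])
    let ?f = "\<sigma> D (lvar m)"
    show "(if m = j then 1 else 2) > (0::nat)"
      by simp
    have "lie_bracket (\<sigma> (euler j)) (\<sigma> D) (lvar m) = - 2 * ?f"
      by (simp add: eigen lconst_uminus)
    then show "(lvar j + lconst \<gamma>) * partial j ?f + of_nat (if m = j then 1 else 2) * ?f = 0"
      by (auto simp: lie_bracket_def \<gamma> partial_lvar Der_add Der_lconst Der_zero aut_Der DD
          algebra_simps)
  qed
  then have "\<sigma> D = \<sigma> (\<lambda>p. 0)"
    by (simp add: aut_zero Der_eqI[OF aut_Der[OF DD] zero_Der])
  then have "D (lvar j) = 0"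
    using aut_inj[OF DD zero_Der] by simp
  then show False
    by (simp add: D_def monom_der_lvar lmonom_neq_zero)
qed

lemma aut_euler: "\<sigma> (euler j) = euler j"
proof -
  obtain \<gamma> where \<gamma>: "\<sigma> (euler j) = (\<lambda>p. (lvar j + lconst \<gamma>) * partial j p)"
    by (rule aut_euler_shift)
  with aut_euler_shift_eq_zero[OF \<gamma>] show ?thesis
    by (simp add: euler_apply fun_eq_iff)
qed

lemma aut_eigen_var_shift:
  assumes D: "D \<in> Der"
    and eigen: "lie_bracket (euler i) D = (\<lambda>p. lconst w * D p)"
    and shift: "\<sigma> D (lvar m) = D (lvar m) + lconst c"
  shows "(w + (if i = m then 1 else 0)) * c = 0"
proof -
  have "lie_bracket (euler i) (\<sigma> D) = \<sigma> (lie_bracket (euler i) D)"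
    using aut_lie_bracket[OF euler_Der D] by (simp add: aut_euler)
  also have "\<dots> = (\<lambda>p. lconst w * \<sigma> D p)"
    by (simp add: eigen aut_lconst_mult[OF D])
  finally have "lie_bracket (euler i) (\<sigma> D) (lvar m) - lie_bracket (euler i) D (lvar m)
      = lconst w * lconst c"
    by (simp add: eigen shift algebra_simps)
  then have "(if i = m then - lconst c else 0) = (lconst (w * c) :: ('n, 'a) laurent)"
    by (auto simp: lie_bracket_def shift euler_lvar Der_add Der_lconst Der_zero aut_Der D euler_Der
        lconst_mult_lconst)
  then have "w * c = (if i = m then - c else 0)"
    by (auto simp flip: lconst_uminus split: if_splits)
  then show ?thesis
    by (auto simp: algebra_simps split: if_splits)
qed

lemma aut_monom_der_induct_step:
  assumes nonneg: "\<And>i. lookup a i \<ge> 0" and "a \<noteq> 0"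
    and IH: "\<And>i. lookup a i \<noteq> 0 \<Longrightarrow> \<sigma> (monom_der (a - unit_exp i) k) = monom_der (a - unit_exp i) k"
  shows "\<sigma> (monom_der a k) = monom_der a k"
proof (rule Der_eqI[OF aut_Der[OF monom_der_Der] monom_der_Der])
  fix m
  obtain c where c: "\<sigma> (monom_der a k) (lvar m) = monom_der a k (lvar m) + lconst c"
    using aut_monom_der_var_shift IH by blast
  have "c = 0"
  proof (rule ccontr)
    assume "c \<noteq> 0"
    have "lookup a i = (if i = k then 1 else 0) - (if i = m then 1 else 0)" for i
    proof -
      have "(of_int (lookup a i) - (if i = k then 1 else 0) + (if i = m then 1 else 0)) * c = 0"
        by (rule aut_eigen_var_shift[OF monom_der_Der lie_bracket_euler_monom_der c])
      with \<open>c \<noteq> 0\<close> have "of_int (lookup a i) - (if i = k then 1 else 0) + (if i = m then 1 else 0) = (0 :: 'a)"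
        by simp
      then have "of_int (lookup a i) = (of_int ((if i = k then 1 else 0) - (if i = m then 1 else 0)) :: 'a)"
        by (auto simp: algebra_simps eq_neg_iff_add_eq_0 split: if_splits)
      then show ?thesis
        by (simp only: of_int_eq_iff)
    qed
    with nonneg have "a = 0"
      by (rule nonneg_exp_eq_unit_exp_diff)
    with \<open>a \<noteq> 0\<close> show False ..
  qed
  with c show "\<sigma> (monom_der a k) (lvar m) = monom_der a k (lvar m)"
    by simp
qed

lemma aut_monom_der_nonneg:
  "(\<And>i. lookup a i \<ge> 0) \<Longrightarrow> \<sigma> (monom_der a k) = monom_der a k"
proof (induction "total_degree a" arbitrary: a rule: less_induct)
  case less
  show ?case
  proof (cases "a = 0")
    case True
    then show ?thesis by (simp add: monom_der_zero fixes_partial)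
  next
    case False
    show ?thesis
    proof (rule aut_monom_der_induct_step[OF less.prems False])
      fix i
      assume "lookup a i \<noteq> 0"
      with less.prems[of i] have "lookup a i \<ge> 1"
        by linarith
      with less.prems show "\<sigma> (monom_der (a - unit_exp i) k) = monom_der (a - unit_exp i) k"
        by (intro less.hyps total_degree_diff_unit_exp) (auto simp: lookup_minus lookup_unit_exp)
    qed
  qed
qed

text \<open>For \<open>b \<ge> N\<close> all exponents in \<open>[x\<^sup>b \<partial>\<^sub>j, x\<^sup>a \<partial>\<^sub>k]\<close> are nonnegative.\<close>

lemma aut_monom_der: "\<sigma> (monom_der a k) = monom_der a k"
proof -
  define N where "N = (\<Sum>i\<in>UNIV. single i (\<bar>lookup a i\<bar> + 1))"
  have lookup_N: "lookup N i = \<bar>lookup a i\<bar> + 1" for i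
    by (simp add: N_def lookup_sum lookup_single when_def)
  have "(\<lambda>p. \<sigma> (monom_der a k) p - monom_der a k p) = (\<lambda>p. 0)"
  proof (rule Der_eq_zero_if_commutes_with_monom_ders[OF diff_Der[OF aut_Der[OF monom_der_Der] monom_der_Der]])
    fix b j
    assume b: "\<And>i. lookup N i \<le> lookup b i"
    have nonneg: "lookup b i \<ge> 0 \<and> lookup (b + a - unit_exp j) i \<ge> 0 \<and> lookup (b + a - unit_exp k) i \<ge> 0"
      for i
      using b[of i] lookup_N[of i] by (auto simp: lookup_add lookup_minus lookup_unit_exp)
    have fixed: "\<sigma> (monom_der b j) = monom_der b j"
      "\<sigma> (monom_der (b + a - unit_exp j) k) = monom_der (b + a - unit_exp j) k"
      "\<sigma> (monom_der (b + a - unit_exp k) j) = monom_der (b + a - unit_exp k) j"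
      by (intro aut_monom_der_nonneg; use nonneg in blast)+
    have "lie_bracket (monom_der b j) (\<sigma> (monom_der a k)) = \<sigma> (lie_bracket (monom_der b j) (monom_der a k))"
      using aut_lie_bracket[OF monom_der_Der monom_der_Der, of b j a k] by (simp add: fixed)
    also have "\<dots> = lie_bracket (monom_der b j) (monom_der a k)"
      by (simp add: lie_bracket_monom_der aut_diff aut_lconst_mult mult_Der monom_der_Der fixed)
    finally have "lie_bracket (monom_der b j) (\<sigma> (monom_der a k))
        = lie_bracket (monom_der b j) (monom_der a k)" .
    then show "lie_bracket (monom_der b j) (\<lambda>p. \<sigma> (monom_der a k) p - monom_der a k p) = (\<lambda>p. 0)"
      by (simp add: lie_bracket_def fun_eq_iff Der_diff[OF monom_der_Der] algebra_simps)
  qed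
  then show ?thesis
    by (simp add: fun_eq_iff)
qed

lemma aut_mult_partial: "\<sigma> (\<lambda>p. f * partial k p) = (\<lambda>p. f * partial k p)"
proof -
  have "f * partial k p = (\<Sum>a\<in>keys f. lconst (lookup f a) * monom_der a k p)" for p
    by (subst (1) laurent_eq_sum_monoms) (simp add: monom_der_def sum_distrib_right mult.assoc)
  then show ?thesis
    by (simp add: aut_sum mult_Der monom_der_Der aut_lconst_mult aut_monom_der)
qed

end

theorem proposition2p11:
  fixes \<sigma> :: "((('n::finite, 'a::field_char_0) laurent \<Rightarrow> ('n, 'a) laurent)
                 \<Rightarrow> (('n, 'a) laurent \<Rightarrow> ('n, 'a) laurent))"
  assumes "lie_aut \<sigma>"
    and "\<And>i. \<sigma> (partial i) = partial i"
  shows "\<forall>D\<in>Der. \<sigma> D = D"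
proof
  interpret partial_fixing_aut \<sigma>
    using assms by unfold_locales
  fix D :: "('n, 'a) laurent \<Rightarrow> ('n, 'a) laurent"
  assume "D \<in> Der"
  then have D: "D = (\<lambda>p. \<Sum>i\<in>UNIV. D (lvar i) * partial i p)"
    by (rule Der_eq_sum_partial)
  have "\<sigma> (\<lambda>p. \<Sum>i\<in>UNIV. D (lvar i) * partial i p) = (\<lambda>p. \<Sum>i\<in>UNIV. D (lvar i) * partial i p)"
    by (simp add: aut_sum mult_Der partial_Der aut_mult_partial)
  with D show "\<sigma> D = D"
    by metis
qed

end
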